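(* Let $E$ be a normed vector space with induced metric $d$, let $V:E\to E$ be a map, and let $S\subset E$ be closed. Suppose that for each $a\in S$ there exist an open neighborhood $\Omega_a$ of $a$ and $K_a>0$ such that $$\limsup_{h\to0^+}\frac{d(x+hV(x),S)-d(x,S)}{h}\le K_a\,d(x,S)\quad\text{for all }x\in\Omega_a.$$ Then $S$ is positively invariant with respect to $V$: every forward solution $\sigma:[0,\delta)\to E$ of $V$ with $\sigma(0)\in S$ satisfies $\sigma(t)\in S$ for all $t\in[0,\delta)$.
   Context: $d(x,S):=\inf_{y\in S}d(x,y)$. A forward solution of $V$ is a continuous curve $\sigma:[0,\delta)\to E$ ($\delta>0$) such that for every $s\in[0,\delta)$, $\|\sigma(s+h)-\sigma(s)-hV(\sigma(s))\|=o(h)$ as $h\to0^+$, i.e. the right derivative of $\sigma$ at $s$ exists and equals $V(\sigma(s))$. *)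

theory Defs
  imports "HOL-Analysis.Analysis"
begin

definition forward_solution :: "('a::real_normed_vector \<Rightarrow> 'a) \<Rightarrow> real \<Rightarrow> (real \<Rightarrow> 'a) \<Rightarrow> bool" where
  "forward_solution V \<delta> \<sigma> \<longleftrightarrow> \<delta> > 0 \<and> continuous_on {0..<\<delta>} \<sigma> \<and>
     (\<forall>s\<in>{0..<\<delta>}. (\<sigma> has_vector_derivative V (\<sigma> s)) (at s within {s..}))"

definition positively_invariant :: "('a::real_normed_vector \<Rightarrow> 'a) \<Rightarrow> 'a set \<Rightarrow> bool" where
  "positively_invariant V S \<longleftrightarrow>
     (\<forall>\<delta> \<sigma>. forward_solution V \<delta> \<sigma> \<and> \<sigma> 0 \<in> S \<longrightarrow> (\<forall>t\<in>{0..<\<delta>}. \<sigma> t \<in> S))"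

end

(* Along a forward solution sigma, the distance g t = d(sigma t, S) has upper right Dini
   derivative at most K g t near each point of S: d(., S) is 1-Lipschitz and
   sigma (t + h) = sigma t + h V(sigma t) + o(h). Comparing g with e exp((K+1)(t-b)) for every
   e > 0 (a Gronwall argument) shows that g vanishes on a short interval after each time
   at which sigma is in S. Real induction on [0, t] spreads this local invariance to the whole
   interval, closedness of S taking care of the limit points. *)

theory Submission
  imports Defs
begin

lemma real_induction:
  fixes a b :: real
  assumes base: "P a"
    and step: "\<And>t. a \<le> t \<Longrightarrow> t < b \<Longrightarrow> \<forall>r\<in>{a..t}. P r \<Longrightarrow> \<exists>d>0. \<forall>r\<in>{t<..<t+d}. P r"
    and limit: "\<And>t. a < t \<Longrightarrow> t \<le> b \<Longrightarrow> \<forall>r\<in>{a..<t}. P r \<Longrightarrow> P t"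
    and t: "t \<in> {a..b}"
  shows "P t"
proof -
  define B where "B = {s\<in>{a..b}. \<forall>r\<in>{a..s}. P r}"
  define s where "s = Sup B"
  have aB: "a \<in> B" using base t by (auto simp: B_def)
  have bdd: "bdd_above B" by (auto simp: B_def bdd_above_def)
  have s: "a \<le> s" "s \<le> b"
    unfolding s_def by (rule cSup_upper[OF aB bdd], rule cSup_least) (use aB in \<open>auto simp: B_def\<close>)
  have below: "\<forall>r\<in>{a..<s}. P r"
  proof
    fix r assume "r \<in> {a..<s}"
    moreover then obtain u where "u \<in> B" "r < u"
      using less_cSup_iff[OF _ bdd] aB by (auto simp: s_def)
    ultimately show "P r" by (auto simp: B_def)
  qed
  have sB: "s \<in> B"
  proof -
    have "P s" using base limit[of s] below s by (cases "s = a") auto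
    then show ?thesis using below s by (auto simp: B_def)
  qed
  have "s = b"
  proof (rule ccontr)
    assume "s \<noteq> b"
    then have "s < b" using s by simp
    then obtain d where d: "d > 0" "\<forall>r\<in>{s<..<s+d}. P r"
      using step[of s] s sB by (auto simp: B_def)
    define s' where "s' = s + min d (b - s) / 2"
    have s': "s < s'" "s' < s + d" "s' \<le> b"
      using d(1) \<open>s < b\<close> by (auto simp: s'_def min_def field_simps)
    have "\<forall>r\<in>{a..s'}. P r"
    proof
      fix r assume "r \<in> {a..s'}"
      then show "P r" using sB d(2) s' by (cases "r \<le> s") (auto simp: B_def)
    qed
    then have "s' \<in> B" using s s' by (simp add: B_def)
    then have "s' \<le> s" unfolding s_def by (rule cSup_upper[OF _ bdd])
    then show False using s' by simp
  qed
  then show ?thesis using sB t by (auto simp: B_def)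
qed

lemma Limsup_ereal_le_iff:
  fixes f :: "'a \<Rightarrow> real"
  shows "Limsup F (\<lambda>x. ereal (f x)) \<le> ereal B \<longleftrightarrow> (\<forall>c>0. \<forall>\<^sub>F x in F. f x < B + c)"
proof
  assume le: "Limsup F (\<lambda>x. ereal (f x)) \<le> ereal B"
  show "\<forall>c>0. \<forall>\<^sub>F x in F. f x < B + c"
  proof (intro allI impI)
    fix c :: real assume "c > 0"
    then have "Limsup F (\<lambda>x. ereal (f x)) < ereal (B + c)" using le by (simp add: le_less_trans)
    then have "\<forall>\<^sub>F x in F. ereal (f x) < ereal (B + c)" by (rule Limsup_lessD)
    then show "\<forall>\<^sub>F x in F. f x < B + c" by simp
  qed
next
  assume ev: "\<forall>c>0. \<forall>\<^sub>F x in F. f x < B + c"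
  show "Limsup F (\<lambda>x. ereal (f x)) \<le> ereal B"
  proof (rule ereal_le_epsilon2)
    fix c :: real assume "c > 0"
    then have "\<forall>\<^sub>F x in F. ereal (f x) \<le> ereal (B + c)"
      using ev by (auto elim!: eventually_mono)
    then have "Limsup F (\<lambda>x. ereal (f x)) \<le> ereal (B + c)"
      by (rule Limsup_bounded)
    then show "Limsup F (\<lambda>x. ereal (f x)) \<le> ereal B + ereal c" by simp
  qed
qed

lemma dini_gronwall_nonpos:
  fixes g :: "real \<Rightarrow> real"
  assumes cont: "continuous_on {a..b} g" and ga: "g a \<le> 0" and K: "K \<ge> 0"
    and dini: "\<And>t. t \<in> {a..<b} \<Longrightarrow>
      Limsup (at_right 0) (\<lambda>h. ereal ((g (t + h) - g t) / h)) \<le> ereal (K * g t)"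
    and t: "t \<in> {a..b}"
  shows "g t \<le> 0"
proof (rule field_le_epsilon)
  fix e :: real assume "e > 0"
  \<comment> \<open>The rate \<open>K + 1\<close> instead of \<open>K\<close> absorbs the slack \<open>c = \<phi> s\<close> of the Dini bound.\<close>
  define \<phi> where "\<phi> r = e * exp ((K + 1) * (r - b))" for r
  have \<phi>_pos: "\<phi> r > 0" for r using \<open>e > 0\<close> by (simp add: \<phi>_def)
  have "g t \<le> \<phi> t"
  proof (rule real_induction[of "\<lambda>r. g r \<le> \<phi> r"])
    show "g a \<le> \<phi> a" using ga \<phi>_pos[of a] by simp
  next
    fix s assume s: "a \<le> s" "s < b" "\<forall>r\<in>{a..s}. g r \<le> \<phi> r"
    then have "\<forall>\<^sub>F h in at_right 0. (g (s + h) - g s) / h < K * g s + \<phi> s"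
      using dini[of s] \<phi>_pos[of s] by (simp add: Limsup_ereal_le_iff)
    then obtain d where d: "d > 0" "\<And>h. 0 < h \<Longrightarrow> h < d \<Longrightarrow> (g (s + h) - g s) / h < K * g s + \<phi> s"
      by (auto simp: eventually_at_right_field)
    have "g r \<le> \<phi> r" if r: "r \<in> {s<..<s+d}" for r
    proof -
      define h where "h = r - s"
      have h: "0 < h" "h < d" using r by (auto simp: h_def)
      have "g r < g s + (K * g s + \<phi> s) * h"
        using d(2)[OF h] h by (simp add: h_def pos_divide_less_eq algebra_simps)
      also have "\<dots> \<le> \<phi> s + (K * \<phi> s + \<phi> s) * h"
        using s h K by (intro add_mono mult_right_mono mult_left_mono) auto
      also have "\<dots> = \<phi> s * (1 + (K + 1) * h)" by (simp add: algebra_simps)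
      also have "\<dots> \<le> \<phi> s * exp ((K + 1) * h)"
        using \<phi>_pos[of s] by (intro mult_left_mono exp_ge_add_one_self) auto
      also have "\<dots> = \<phi> r" by (simp add: \<phi>_def h_def mult.assoc exp_add[symmetric] algebra_simps)
      finally show ?thesis by simp
    qed
    then show "\<exists>d>0. \<forall>r\<in>{s<..<s+d}. g r \<le> \<phi> r" using d(1) by blast
  next
    fix s assume s: "a < s" "s \<le> b" "\<forall>r\<in>{a..<s}. g r \<le> \<phi> r"
    have "continuous_on (closure {a..<s}) (\<lambda>r. g r - \<phi> r)"
      using s by (auto simp: \<phi>_def intro!: continuous_intros continuous_on_subset[OF cont])
    then have "(\<lambda>r. g r - \<phi> r) ` closure {a..<s} \<subseteq> {..0}"
      by (rule image_closure_subset) (use s in auto)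
    then show "g s \<le> \<phi> s" using s by (simp add: image_subset_iff)
  qed (use t in auto)
  also have "\<phi> t \<le> e" using t \<open>e > 0\<close> K by (auto simp: \<phi>_def mult_nonneg_nonpos)
  finally show "g t \<le> 0 + e" by simp
qed

lemma infdist_dini_along_curve_le:
  fixes \<sigma> :: "real \<Rightarrow> 'a::real_normed_vector"
  assumes der: "(\<sigma> has_vector_derivative v) (at t within {t..})"
    and tangent: "Limsup (at_right 0)
        (\<lambda>h. ereal ((infdist (\<sigma> t + h *\<^sub>R v) S - infdist (\<sigma> t) S) / h)) \<le> ereal B"
  shows "Limsup (at_right 0)
        (\<lambda>h. ereal ((infdist (\<sigma> (t + h)) S - infdist (\<sigma> t) S) / h)) \<le> ereal B"
  unfolding Limsup_ereal_le_iff
proof (intro allI impI)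
  fix c :: real assume "c > 0"
  then have "\<forall>\<^sub>F h in at_right 0. (infdist (\<sigma> t + h *\<^sub>R v) S - infdist (\<sigma> t) S) / h < B + c/2"
    using tangent by (simp add: Limsup_ereal_le_iff)
  moreover have "\<forall>\<^sub>F h in at_right 0. dist (\<sigma> (t + h)) (\<sigma> t + h *\<^sub>R v) \<le> c/2 * h"
  proof -
    have "(\<sigma> has_derivative (\<lambda>u. u *\<^sub>R v)) (at t within {t..})"
      using der by (simp add: has_vector_derivative_def)
    then obtain d where "d > 0" and d: "\<forall>y\<in>{t..}. norm (y - t) < d \<longrightarrow>
        norm (\<sigma> y - \<sigma> t - (y - t) *\<^sub>R v) \<le> c/2 * norm (y - t)"
      using \<open>c > 0\<close> unfolding has_derivative_within_alt by (meson half_gt_zero)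
    show ?thesis
      unfolding eventually_at_right_field
    proof (intro exI[of _ d] conjI allI impI)
      fix h :: real assume "0 < h" "h < d"
      then show "dist (\<sigma> (t + h)) (\<sigma> t + h *\<^sub>R v) \<le> c/2 * h"
        using d[rule_format, of "t + h"] by (simp add: dist_norm algebra_simps)
    qed fact
  qed
  ultimately show "\<forall>\<^sub>F h in at_right 0. (infdist (\<sigma> (t + h)) S - infdist (\<sigma> t) S) / h < B + c"
    using eventually_at_right_less[of 0]
  proof eventually_elim
    case (elim h)
    then have "infdist (\<sigma> t + h *\<^sub>R v) S - infdist (\<sigma> t) S < (B + c/2) * h"
      by (simp add: pos_divide_less_eq)
    moreover have "infdist (\<sigma> (t + h)) S \<le> infdist (\<sigma> t + h *\<^sub>R v) S + dist (\<sigma> (t + h)) (\<sigma> t + h *\<^sub>R v)"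
      by (rule infdist_triangle)
    ultimately show ?case using elim by (simp add: pos_divide_less_eq algebra_simps)
  qed
qed

lemma forward_solution_locally_invariant:
  fixes V :: "'a::real_normed_vector \<Rightarrow> 'a"
  assumes sol: "forward_solution V \<delta> \<sigma>" and S: "closed S"
    and s: "s \<in> {0..<\<delta>}" "\<sigma> s \<in> S"
    and \<Omega>: "open \<Omega>" "\<sigma> s \<in> \<Omega>" and K: "K \<ge> 0"
    and bound: "\<forall>x\<in>\<Omega>. Limsup (at_right 0)
        (\<lambda>h. ereal ((infdist (x + h *\<^sub>R V x) S - infdist x S) / h)) \<le> ereal (K * infdist x S)"
  shows "\<exists>d>0. \<forall>r\<in>{s<..<s+d}. \<sigma> r \<in> S"
proof -
  have cont: "continuous_on {0..<\<delta>} \<sigma>"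
    and der: "\<And>r. r \<in> {0..<\<delta>} \<Longrightarrow> (\<sigma> has_vector_derivative V (\<sigma> r)) (at r within {r..})"
    using sol by (auto simp: forward_solution_def)
  obtain e where "e > 0" and e: "ball (\<sigma> s) e \<subseteq> \<Omega>" using \<Omega> open_contains_ball by blast
  then obtain \<epsilon> where "\<epsilon> > 0" and \<epsilon>: "\<forall>r\<in>{0..<\<delta>}. dist r s < \<epsilon> \<longrightarrow> dist (\<sigma> r) (\<sigma> s) < e"
    using cont s unfolding continuous_on_iff by blast
  define d where "d = min \<epsilon> (\<delta> - s) / 2"
  have "d > 0" "d < \<epsilon>" "s + d < \<delta>"
    using \<open>\<epsilon> > 0\<close> s unfolding d_def min_def by (auto simp: field_simps)
  have dom: "r \<in> {0..<\<delta>}" "\<sigma> r \<in> \<Omega>" if "r \<in> {s..s+d}" for r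
  proof -
    show r: "r \<in> {0..<\<delta>}" using that s \<open>s + d < \<delta>\<close> by auto
    have "dist r s < \<epsilon>" using that \<open>d < \<epsilon>\<close> by (auto simp: dist_real_def)
    then show "\<sigma> r \<in> \<Omega>" using \<epsilon> r e by (auto simp: dist_commute)
  qed
  define g where "g r = infdist (\<sigma> r) S" for r
  have "g r \<le> 0" if "r \<in> {s..s+d}" for r
  proof (rule dini_gronwall_nonpos[OF _ _ K _ that])
    show "continuous_on {s..s+d} g"
      unfolding g_def using dom by (intro continuous_on_infdist continuous_on_subset[OF cont]) auto
    show "g s \<le> 0" using s by (simp add: g_def)
    fix r assume "r \<in> {s..<s+d}"
    then show "Limsup (at_right 0) (\<lambda>h. ereal ((g (r + h) - g r) / h)) \<le> ereal (K * g r)"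
      unfolding g_def using dom[of r] bound by (intro infdist_dini_along_curve_le[OF der]) auto
  qed
  then have "infdist (\<sigma> r) S = 0" if "r \<in> {s..s+d}" for r
    using that infdist_nonneg[of "\<sigma> r" S] by (simp add: g_def order_antisym)
  then have "\<sigma> r \<in> S" if "r \<in> {s..s+d}" for r
    using that in_closed_iff_infdist_zero[OF S] s(2) by blast
  then show ?thesis using \<open>d > 0\<close> by (intro exI[of _ d]) auto
qed

theorem theorem6p6:
  fixes V :: "'a::real_normed_vector \<Rightarrow> 'a" and S :: "'a set"
  assumes "closed S"
    and "\<forall>a\<in>S. \<exists>\<Omega> K. open \<Omega> \<and> a \<in> \<Omega> \<and> K > 0 \<and>
           (\<forall>x\<in>\<Omega>. Limsup (at_right 0)
               (\<lambda>h. ereal ((infdist (x + h *\<^sub>R V x) S - infdist x S) / h))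
             \<le> ereal (K * infdist x S))"
  shows "positively_invariant V S"
  unfolding positively_invariant_def
proof (intro allI impI ballI)
  fix \<delta> \<sigma> t assume sol: "forward_solution V \<delta> \<sigma> \<and> \<sigma> 0 \<in> S" and t: "t \<in> {0..<\<delta>}"
  have cont: "continuous_on {0..t} \<sigma>"
    using sol t by (auto simp: forward_solution_def elim!: continuous_on_subset)
  show "\<sigma> t \<in> S"
  proof (rule real_induction[of "\<lambda>r. \<sigma> r \<in> S"])
    fix r assume r: "0 \<le> r" "r < t" "\<forall>u\<in>{0..r}. \<sigma> u \<in> S"
    then have "\<sigma> r \<in> S" by simp
    then obtain \<Omega> K where "open \<Omega>" "\<sigma> r \<in> \<Omega>" "K > 0" and "\<forall>x\<in>\<Omega>. Limsup (at_right 0)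
        (\<lambda>h. ereal ((infdist (x + h *\<^sub>R V x) S - infdist x S) / h)) \<le> ereal (K * infdist x S)"
      using assms(2) by blast
    then show "\<exists>d>0. \<forall>u\<in>{r<..<r+d}. \<sigma> u \<in> S"
      using sol r t assms(1)
      by (intro forward_solution_locally_invariant[where \<delta> = \<delta>]) (auto simp: less_imp_le)
  next
    fix r assume r: "0 < r" "r \<le> t" "\<forall>u\<in>{0..<r}. \<sigma> u \<in> S"
    have "\<sigma> ` closure {0..<r} \<subseteq> S"
      using r by (intro image_closure_subset[OF _ assms(1)] continuous_on_subset[OF cont]) auto
    then show "\<sigma> r \<in> S" using r by auto
  qed (use sol t in auto)
qed

end
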